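(* For integers $n\ge1$, $\alpha\ge1$ and $a\in\mathbb{C}$, define $$R_n(a,\alpha)=\int_{[0,\infty)^n}\prod_{j=1}^n e^{-y_j}y_j(a-y_j)^{\alpha}\,\Delta_n^2(\mathbf{y})\,dy_1\cdots dy_n.$$ Then $$R_n(a,\alpha)=(-1)^{n\alpha}\prod_{j=0}^{n-1}\big((j+1)!\big)^2\prod_{j=0}^{\alpha-1}\frac{(n+j)!}{j!}\,\det\Big[L^{(j)}_{n+i-j}(a)\Big]_{i,j=1,\dots,\alpha}.$$
   Context: $\Delta_n(\mathbf{y})=\prod_{1\le i<k\le n}(y_k-y_i)$. $L^{(\rho)}_M(z)=\frac{(\rho+1)_M}{M!}\sum_{j=0}^M\frac{(-M)_j}{(\rho+1)_j}\frac{z^j}{j!}$ is the generalized Laguerre polynomial, with $(a)_k$ the Pochhammer symbol. *)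

theory Defs
  imports "HOL-Analysis.Analysis" "Jordan_Normal_Form.Determinant"
begin

definition Delta :: "nat \<Rightarrow> (nat \<Rightarrow> real) \<Rightarrow> real" where
  "Delta n y = (\<Prod>k<n. \<Prod>i<k. y k - y i)"

text \<open>Generalized Laguerre polynomial L^{(rho)}_M(z); degree M is an integer,
  with the convention L_M = 0 for M < 0.\<close>
definition laguerre :: "nat \<Rightarrow> int \<Rightarrow> complex \<Rightarrow> complex" where
  "laguerre \<rho> M z = (if M < 0 then 0 else
     let m = nat M in
     pochhammer (of_nat \<rho> + 1) m / of_nat (fact m) *
     (\<Sum>j\<le>m. pochhammer (- of_nat m) j / pochhammer (of_nat \<rho> + 1) j * z ^ j / of_nat (fact j)))"

definition R_int :: "nat \<Rightarrow> complex \<Rightarrow> nat \<Rightarrow> complex" where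
  "R_int n a \<alpha> = (LINT y : {y \<in> space (PiM {..<n} (\<lambda>_. lborel)). \<forall>j<n. 0 \<le> y j}
      | PiM {..<n} (\<lambda>_. lborel).
      (\<Prod>j<n. complex_of_real (exp (- y j) * y j) * (a - complex_of_real (y j)) ^ \<alpha>)
        * complex_of_real ((Delta n y)\<^sup>2))"

end

theory Submission
  imports Defs "HOL-Combinatorics.Stirling" "HOL-Probability.Sinc_Integral"
begin

text \<open>Squaring the Vandermonde expansion of \<open>\<Delta>\<^sub>n\<close> and integrating factorwise (Andreief's
  identity) gives \<open>R\<^sub>n = n! det[\<mu>(i+j)]\<close>, a Hankel determinant of the moments
  \<open>\<mu>(m) = \<integral>\<^sub>0\<^sup>\<infinity> t e^(-t) t^m (a-t)^\<alpha> dt\<close>. Triangular changes of basis turn it into the Gram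
  determinant of the monic orthogonal polynomials \<open>P\<^sub>i\<close> for the weight \<open>t e^(-t)\<close> (multiples of
  \<open>L^(1)\<^sub>i\<close>) against \<open>(t-a)^(j+\<alpha>)\<close>. Expanding \<open>(t-a)^k = \<Sum>\<^sub>r T\<^sub>k\<^sub>r P\<^sub>r\<close>, orthogonality
  reduces this to an \<open>n \<times> n\<close> minor of \<open>T = S\<^sup>-\<^sup>1\<close>, where \<open>S\<close> is the unitriangular matrix of
  Taylor coefficients of the \<open>P\<^sub>r\<close> at \<open>a\<close>. Jacobi's complementary minor theorem trades it for
  an \<open>\<alpha> \<times> \<alpha>\<close> minor of \<open>S\<close>, whose entries are the values \<open>L^(k+1)\<^sub>r\<^sub>-\<^sub>k(a)\<close>, because
  derivatives of Laguerre polynomials are again Laguerre polynomials.\<close>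

section \<open>Laguerre polynomials and their orthogonality\<close>

lemma sum_alternating_binomial_power_Suc:
  "(\<Sum>t\<le>Suc M. (-1::'a::comm_ring_1)^t * of_nat (Suc M choose t) * of_nat t ^ Suc s)
   = - of_nat (Suc M) * (\<Sum>t\<le>M. (-1)^t * of_nat (M choose t) * (of_nat t + 1) ^ s)"
proof -
  have "(\<Sum>t\<le>Suc M. (-1::'a)^t * of_nat (Suc M choose t) * of_nat t ^ Suc s)
    = (\<Sum>t\<le>M. (-1::'a)^Suc t * of_nat (Suc M choose Suc t) * of_nat (Suc t) ^ Suc s)"
    by (subst sum.atMost_Suc_shift) simp
  also have "\<dots> = (\<Sum>t\<le>M. - of_nat (Suc M) * ((-1)^t * of_nat (M choose t) * (of_nat t + 1) ^ s))"
  proof (rule sum.cong[OF refl])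
    fix t
    have e: "of_nat (Suc t) * (of_nat (Suc M choose Suc t)::'a) = of_nat (Suc M) * of_nat (M choose t)"
      using Suc_times_binomial[of t M] by (metis of_nat_mult)
    have "(-1::'a)^Suc t * of_nat (Suc M choose Suc t) * of_nat (Suc t) ^ Suc s
       = - ((-1)^t * (of_nat (Suc t) * of_nat (Suc M choose Suc t)) * of_nat (Suc t) ^ s)"
      by (simp add: algebra_simps)
    also have "\<dots> = - of_nat (Suc M) * ((-1)^t * of_nat (M choose t) * (of_nat t + 1) ^ s)"
      unfolding e by (simp add: algebra_simps)
    finally show "(-1::'a)^Suc t * of_nat (Suc M choose Suc t) * of_nat (Suc t) ^ Suc s
       = - of_nat (Suc M) * ((-1)^t * of_nat (M choose t) * (of_nat t + 1) ^ s)" .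
  qed
  also have "\<dots> = - of_nat (Suc M) * (\<Sum>t\<le>M. (-1)^t * of_nat (M choose t) * (of_nat t + 1) ^ s)"
    by (simp add: sum_distrib_left)
  finally show ?thesis .
qed

lemma sum_alternating_binomial_power:
  assumes "s \<le> M"
  shows "(\<Sum>t\<le>M. (-1::'a::{comm_ring_1,ring_char_0})^t * of_nat (M choose t) * of_nat t ^ s)
     = (if s < M then 0 else (-1)^M * fact M)"
  using assms
proof (induction M arbitrary: s)
  case 0
  then show ?case by simp
next
  case (Suc M)
  show ?case
  proof (cases s)
    case 0
    then show ?thesis using choose_alternating_sum[of "Suc M"] by simp
  next
    case (Suc s')
    with Suc.prems have s': "s' \<le> M" by simp
    have "(\<Sum>t\<le>M. (-1::'a)^t * of_nat (M choose t) * (of_nat t + 1) ^ s')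
      = (\<Sum>t\<le>M. \<Sum>u\<le>s'. of_nat (s' choose u) * ((-1)^t * of_nat (M choose t) * of_nat t ^ u))"
    proof (rule sum.cong[OF refl])
      fix t
      have "(of_nat t + 1::'a)^s' = (\<Sum>u\<le>s'. of_nat (s' choose u) * of_nat t ^ u)"
        using binomial_ring[of "of_nat t::'a" 1 s'] by simp
      then show "(-1::'a)^t * of_nat (M choose t) * (of_nat t + 1) ^ s'
          = (\<Sum>u\<le>s'. of_nat (s' choose u) * ((-1)^t * of_nat (M choose t) * of_nat t ^ u))"
        by (simp add: sum_distrib_left algebra_simps)
    qed
    also have "\<dots> = (\<Sum>u\<le>s'. of_nat (s' choose u) * (\<Sum>t\<le>M. (-1)^t * of_nat (M choose t) * of_nat t ^ u))"
      by (subst sum.swap) (simp add: sum_distrib_left)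
    also have "\<dots> = (\<Sum>u\<le>s'. of_nat (s' choose u) * (if u < M then 0 else (-1)^M * fact M))"
      using s' Suc.IH by (intro sum.cong) auto
    also have "\<dots> = (if s' < M then 0 else (-1)^M * fact M)"
    proof (cases "s' < M")
      case False
      then have "s' = M" using s' by simp
      then have "(\<Sum>u\<le>s'. of_nat (s' choose u) * (if u < M then 0 else (-1)^M * fact M))
         = (\<Sum>u\<le>M. if u = M then (-1::'a)^M * fact M else 0)"
        by (intro sum.cong) auto
      then show ?thesis using \<open>s' = M\<close> by simp
    qed (simp add: sum.neutral)
    finally show ?thesis
      unfolding Suc sum_alternating_binomial_power_Suc using s' by (auto simp: algebra_simps)
  qed
qed

lemma pochhammer_of_nat_Suc_mult_fact:
  "pochhammer (of_nat (Suc j) :: 'a::{comm_semiring_1,semiring_char_0}) k * fact j = fact (k + j)"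
  using pochhammer_product'[of "1::'a" j k] by (simp add: pochhammer_fact add.commute mult.commute)

lemma pochhammer_minus_of_nat_mult_fact:
  "j \<le> m \<Longrightarrow> pochhammer (- of_nat m :: 'a::{comm_ring_1,ring_char_0}) j * fact (m - j) = (-1)^j * fact m"
proof (induction j)
  case 0 then show ?case by simp
next
  case (Suc j)
  then have jm: "j < m" by simp
  have f: "(fact (m - j) :: 'a) = of_nat (m - j) * fact (m - Suc j)"
    using jm by (metis Suc_diff_Suc fact_Suc)
  have "pochhammer (- of_nat m :: 'a) (Suc j) * fact (m - Suc j)
     = - (pochhammer (- of_nat m) j * (of_nat (m - j) * fact (m - Suc j)))"
    using jm by (simp add: pochhammer_Suc of_nat_diff algebra_simps)
  also have "\<dots> = (-1)^Suc j * fact m" using Suc jm f by simp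
  finally show ?case .
qed

definition laguerre_coeff :: "nat \<Rightarrow> nat \<Rightarrow> nat \<Rightarrow> complex" where
  "laguerre_coeff \<rho> M j = (-1)^j * fact (M + \<rho>) / (fact (j + \<rho>) * fact (M - j) * fact j)"

definition laguerre_poly :: "nat \<Rightarrow> nat \<Rightarrow> complex poly" where
  "laguerre_poly \<rho> M = (\<Sum>j\<le>M. monom (laguerre_coeff \<rho> M j) j)"

lemma poly_laguerre_poly: "poly (laguerre_poly \<rho> M) x = (\<Sum>j\<le>M. laguerre_coeff \<rho> M j * x^j)"
  by (simp add: laguerre_poly_def poly_sum poly_monom)

lemma coeff_laguerre_poly:
  "coeff (laguerre_poly \<rho> M) k = (if k \<le> M then laguerre_coeff \<rho> M k else 0)"
  by (simp add: laguerre_poly_def coeff_sum coeff_monom)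

lemma degree_laguerre_poly: "degree (laguerre_poly \<rho> M) \<le> M"
  by (rule degree_le) (simp add: coeff_laguerre_poly)

lemma laguerre_eq_poly_laguerre_poly: "laguerre \<rho> (int M) z = poly (laguerre_poly \<rho> M) z"
proof -
  have pr: "pochhammer (of_nat \<rho> + 1 :: complex) k = fact (k + \<rho>) / fact \<rho>" for k
    using pochhammer_of_nat_Suc_mult_fact[of \<rho> k, where 'a=complex] by (simp add: field_simps)
  have "laguerre \<rho> (int M) z = pochhammer (of_nat \<rho> + 1) M / of_nat (fact M) *
     (\<Sum>j\<le>M. pochhammer (- of_nat M) j / pochhammer (of_nat \<rho> + 1) j * z ^ j / of_nat (fact j))"
    unfolding laguerre_def by simp
  also have "\<dots> = (\<Sum>j\<le>M. laguerre_coeff \<rho> M j * z^j)"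
    unfolding sum_distrib_left
  proof (rule sum.cong[OF refl])
    fix j assume "j \<in> {..M}"
    then have "pochhammer (- of_nat M :: complex) j = (-1)^j * fact M / fact (M - j)"
      using pochhammer_minus_of_nat_mult_fact[of j M] by (simp add: field_simps)
    then show "pochhammer (of_nat \<rho> + 1) M / of_nat (fact M) *
        (pochhammer (- of_nat M) j / pochhammer (of_nat \<rho> + 1) j * z ^ j / of_nat (fact j)) =
        laguerre_coeff \<rho> M j * z ^ j"
      unfolding pr laguerre_coeff_def by (simp add: field_simps add.commute)
  qed
  finally show ?thesis by (simp add: poly_laguerre_poly)
qed

lemma laguerre_coeff_mult_binomial:
  assumes "k + i \<le> M"
  shows "laguerre_coeff 1 M (k+i) * of_nat ((k+i) choose k)
    = (-1)^k / fact k * laguerre_coeff (Suc k) (M-k) i"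
proof -
  have b: "(of_nat ((k+i) choose k) :: complex) = fact (k+i) / (fact k * fact i)"
    using binomial_fact[of k "k+i", where 'a=complex] by simp
  have e: "M - k + Suc k = Suc M" "i + Suc k = Suc (k+i)" "M - k - i = M - (k+i)"
    "M + 1 = Suc M" "k + i + 1 = Suc (k+i)"
    using assms by auto
  show ?thesis
    unfolding b laguerre_coeff_def e by (simp add: field_simps power_add del: fact_Suc)
qed

text \<open>The \<open>k\<close>-th derivative of \<open>L^(1)_M\<close> is \<open>(-1)^k L^(k+1)_(M-k)\<close>.\<close>

lemma poly_laguerre_poly_shift:
  "poly (laguerre_poly 1 M) (t + a)
    = (\<Sum>k\<le>M. (-1)^k * poly (laguerre_poly (Suc k) (M - k)) a / fact k * t^k)"
proof -
  define G where "G k i = laguerre_coeff 1 M (k+i) * of_nat ((k+i) choose k) * t^k * a^i" for k i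
  have "poly (laguerre_poly 1 M) (t + a) = (\<Sum>j\<le>M. \<Sum>k\<le>j. G k (j - k))"
    unfolding poly_laguerre_poly G_def binomial_ring[of t a]
    by (intro sum.cong refl) (simp add: sum_distrib_left algebra_simps)
  also have "\<dots> = (\<Sum>(k,i)\<in>{(k,i). k + i \<le> M}. G k i)"
    by (rule sum.triangle_reindex_eq[symmetric])
  also have "{(k,i). k + i \<le> M} = Sigma {..M} (\<lambda>k. {..M-k})" by auto
  also have "(\<Sum>(k,i)\<in>Sigma {..M} (\<lambda>k. {..M-k}). G k i) = (\<Sum>k\<le>M. \<Sum>i\<le>M-k. G k i)"
    by (rule sum.Sigma[symmetric]) auto
  also have "\<dots> = (\<Sum>k\<le>M. \<Sum>i\<le>M-k. (-1)^k / fact k * laguerre_coeff (Suc k) (M-k) i * a^i * t^k)"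
  proof (intro sum.cong refl)
    fix k i assume "k \<in> {..M}" "i \<in> {..M-k}"
    then have "k + i \<le> M" by auto
    from laguerre_coeff_mult_binomial[OF this]
    show "G k i = (-1)^k / fact k * laguerre_coeff (Suc k) (M-k) i * a^i * t^k"
      unfolding G_def by simp
  qed
  also have "\<dots> = (\<Sum>k\<le>M. (-1)^k * poly (laguerre_poly (Suc k) (M - k)) a / fact k * t^k)"
    unfolding poly_laguerre_poly
    by (simp add: sum_distrib_left sum_distrib_right sum_divide_distrib algebra_simps)
  finally show ?thesis .
qed

lemma laguerre_poly_taylor:
  "laguerre_poly 1 M =
     (\<Sum>k\<le>M. Polynomial.smult ((-1)^k * poly (laguerre_poly (Suc k) (M - k)) a / fact k) ([:-a,1:]^k))"
proof (rule poly_eq_poly_eq_iff[THEN iffD1], rule ext)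
  fix x
  show "poly (laguerre_poly 1 M) x = poly (\<Sum>k\<le>M. Polynomial.smult
      ((-1)^k * poly (laguerre_poly (Suc k) (M - k)) a / fact k) ([:-a,1:]^k)) x"
    using poly_laguerre_poly_shift[of M "x - a" a] by (simp add: poly_sum)
qed

text \<open>The functional \<open>p \<mapsto> \<integral>\<^sub>0\<^sup>\<infinity> t e^(-t) p(t) dt\<close>, given by its moments \<open>(k+1)!\<close>
  (see \<open>has_bochner_integral_moment_functional\<close>).\<close>

definition moment_functional :: "complex poly \<Rightarrow> complex" where
  "moment_functional p = (\<Sum>k\<le>degree p. coeff p k * fact (Suc k))"

lemma moment_functional_eq_sum:
  assumes "degree p < K"
  shows "moment_functional p = (\<Sum>k<K. coeff p k * fact (Suc k))"
proof -
  have "(\<Sum>k<K. coeff p k * fact (Suc k)) = (\<Sum>k\<le>degree p. coeff p k * fact (Suc k))"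
    by (rule sum.mono_neutral_right) (use assms in \<open>auto simp: coeff_eq_0\<close>)
  then show ?thesis unfolding moment_functional_def by simp
qed

lemma moment_functional_add: "moment_functional (p + q) = moment_functional p + moment_functional q"
proof -
  define K where "K = Suc (max (degree p) (degree q))"
  have "degree (p + q) < K" "degree p < K" "degree q < K"
    unfolding K_def using degree_add_le_max[of p q] by auto
  then show ?thesis by (simp add: moment_functional_eq_sum[of _ K] sum.distrib algebra_simps)
qed

lemma moment_functional_smult: "moment_functional (Polynomial.smult c p) = c * moment_functional p"
proof -
  have "degree (Polynomial.smult c p) < Suc (degree p)" "degree p < Suc (degree p)"
    using degree_smult_le[of c p] by auto
  then show ?thesis
    by (simp add: moment_functional_eq_sum[of _ "Suc (degree p)"] sum_distrib_left algebra_simps)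
qed

lemma moment_functional_0 [simp]: "moment_functional 0 = 0"
  by (simp add: moment_functional_def)

lemma moment_functional_sum: "moment_functional (\<Sum>i\<in>A. f i) = (\<Sum>i\<in>A. moment_functional (f i))"
  by (induction A rule: infinite_finite_induct) (auto simp: moment_functional_add)

lemma moment_functional_monom: "moment_functional (monom c k) = c * fact (Suc k)"
proof -
  have "degree (monom c k) < Suc k" by (meson degree_monom_le le_imp_less_Suc)
  then show ?thesis by (simp add: moment_functional_eq_sum coeff_monom sum.delta)
qed

text \<open>Expand the Pochhammer symbol in powers via Stirling numbers.\<close>

lemma sum_alternating_binomial_pochhammer:
  assumes "s \<le> M"
  shows "(\<Sum>t\<le>M. (-1::'a::{comm_ring_1,ring_char_0})^t * of_nat (M choose t) * pochhammer (of_nat t) s)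
     = (if s < M then 0 else (-1)^M * fact M)"
proof -
  have "(\<Sum>t\<le>M. (-1::'a)^t * of_nat (M choose t) * pochhammer (of_nat t) s)
      = (\<Sum>u\<le>s. of_nat (stirling s u) * (\<Sum>t\<le>M. (-1)^t * of_nat (M choose t) * of_nat t ^ u))"
    unfolding stirling_pochhammer[symmetric] sum_distrib_left
    by (subst sum.swap) (simp add: algebra_simps)
  also have "\<dots> = (\<Sum>u\<le>s. of_nat (stirling s u) * (if u < M then 0 else (-1)^M * fact M))"
    using assms by (intro sum.cong refl arg_cong2[where f="(*)"] sum_alternating_binomial_power) auto
  also have "\<dots> = (if s < M then 0 else (-1)^M * fact M)"
  proof (cases "s < M")
    case False
    then have "s = M" using assms by simp
    then have "(\<Sum>u\<le>s. of_nat (stirling s u) * (if u < M then 0 else (-1::'a)^M * fact M))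
       = (\<Sum>u\<le>s. if u = s then (-1::'a)^M * fact M else 0)"
      by (intro sum.cong) auto
    then show ?thesis using \<open>s = M\<close> by simp
  qed (simp add: sum.neutral)
  finally show ?thesis .
qed

lemma moment_functional_monom_mult_laguerre_poly:
  assumes "m \<le> r"
  shows "moment_functional (monom 1 m * laguerre_poly 1 r) = (if m < r then 0 else (-1)^r * fact (Suc r))"
proof -
  define g where "g t = (-1::complex)^t * of_nat (Suc r choose t) * pochhammer (of_nat t) (Suc m)" for t
  have "monom 1 m * laguerre_poly 1 r = (\<Sum>j\<le>r. monom (laguerre_coeff 1 r j) (m+j))"
    by (simp add: laguerre_poly_def sum_distrib_left mult_monom)
  then have "moment_functional (monom 1 m * laguerre_poly 1 r)
      = (\<Sum>j\<le>r. laguerre_coeff 1 r j * fact (Suc (m+j)))"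
    by (simp add: moment_functional_sum moment_functional_monom)
  also have "\<dots> = (\<Sum>j\<le>r. - g (Suc j))"
  proof (rule sum.cong[OF refl])
    fix j assume "j \<in> {..r}"
    then have b: "(of_nat (Suc r choose Suc j) :: complex) = fact (Suc r) / (fact (Suc j) * fact (r - j))"
      using binomial_fact[of "Suc j" "Suc r", where 'a=complex] by simp
    have p: "pochhammer (of_nat (Suc j) :: complex) (Suc m) = fact (Suc m + j) / fact j"
      using pochhammer_of_nat_Suc_mult_fact[of j "Suc m", where 'a=complex] by (simp add: field_simps)
    have e: "r + 1 = Suc r" "j + 1 = Suc j" "Suc m + j = Suc (m+j)" by auto
    show "laguerre_coeff 1 r j * fact (Suc (m+j)) = - g (Suc j)"
      unfolding g_def b p laguerre_coeff_def e by (simp add: field_simps del: fact_Suc)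
  qed
  also have "\<dots> = - (\<Sum>t\<le>Suc r. g t)"
    by (subst sum.atMost_Suc_shift) (simp add: g_def pochhammer_0_left sum_negf)
  also have "(\<Sum>t\<le>Suc r. g t) = (if m < r then 0 else (-1)^Suc r * fact (Suc r))"
    unfolding g_def using assms by (subst sum_alternating_binomial_pochhammer) auto
  finally show ?thesis by auto
qed

lemma smult_sum_right: "Polynomial.smult c (\<Sum>i\<in>A. f i) = (\<Sum>i\<in>A. Polynomial.smult c (f i))"
  by (induction A rule: infinite_finite_induct) (auto simp: smult_add_right)

lemma moment_functional_mult_eq_sum:
  assumes "degree p < n"
  shows "moment_functional (p * q) = (\<Sum>m<n. coeff p m * moment_functional (monom 1 m * q))"
proof -
  have "p = (\<Sum>m<n. monom (coeff p m) m)"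
    using assms by (intro poly_eqI) (auto simp: coeff_sum coeff_monom coeff_eq_0)
  then have "p * q = (\<Sum>m<n. Polynomial.smult (coeff p m) (monom 1 m * q))"
    by (metis (no_types, lifting) mult_smult_left smult_monom mult.right_neutral sum.cong sum_distrib_right)
  then show ?thesis by (simp add: moment_functional_sum moment_functional_smult)
qed

definition monic_laguerre :: "nat \<Rightarrow> complex poly" where
  "monic_laguerre r = Polynomial.smult ((-1)^r * fact r) (laguerre_poly 1 r)"

lemma degree_monic_laguerre: "degree (monic_laguerre r) \<le> r"
  unfolding monic_laguerre_def using degree_laguerre_poly degree_smult_le order.trans by blast

lemma coeff_monic_laguerre_self: "coeff (monic_laguerre r) r = 1"
  by (simp add: monic_laguerre_def coeff_laguerre_poly laguerre_coeff_def flip: of_nat_Suc)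

lemma moment_functional_monom_mult_monic_laguerre:
  assumes "m \<le> r"
  shows "moment_functional (monom 1 m * monic_laguerre r) = (if m < r then 0 else fact r * fact (Suc r))"
  using moment_functional_monom_mult_laguerre_poly[OF assms]
  by (auto simp: monic_laguerre_def moment_functional_smult mult_smult_right
      power_mult_distrib[symmetric])

lemma moment_functional_monic_laguerre_orthogonal_le:
  assumes "i \<le> r"
  shows "moment_functional (monic_laguerre i * monic_laguerre r) = (if i = r then fact i * fact (Suc i) else 0)"
proof -
  have "moment_functional (monic_laguerre i * monic_laguerre r)
      = (\<Sum>m<Suc i. coeff (monic_laguerre i) m * moment_functional (monom 1 m * monic_laguerre r))"
    using degree_monic_laguerre by (intro moment_functional_mult_eq_sum) (simp add: le_imp_less_Suc)
  also have "\<dots> = (\<Sum>m<Suc i. if m = r then fact r * fact (Suc r) else 0)"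
  proof (rule sum.cong[OF refl])
    fix m assume "m \<in> {..<Suc i}"
    then have "m \<le> r" "m = r \<longleftrightarrow> m = i \<and> i = r" using assms by auto
    then show "coeff (monic_laguerre i) m * moment_functional (monom 1 m * monic_laguerre r)
        = (if m = r then fact r * fact (Suc r) else 0)"
      by (auto simp: moment_functional_monom_mult_monic_laguerre coeff_monic_laguerre_self)
  qed
  also have "\<dots> = (if i = r then fact i * fact (Suc i) else 0)"
    using assms by auto
  finally show ?thesis .
qed

lemma moment_functional_monic_laguerre_orthogonal:
  "moment_functional (monic_laguerre i * monic_laguerre r) = (if i = r then fact i * fact (Suc i) else 0)"
  using moment_functional_monic_laguerre_orthogonal_le[of i r]
    moment_functional_monic_laguerre_orthogonal_le[of r i]
  by (cases "i \<le> r") (auto simp: mult.commute)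

text \<open>The coefficient of \<open>(x - a)^k\<close> in \<open>monic_laguerre r\<close> (see \<open>monic_laguerre_taylor\<close>).
  No case distinction is needed for \<open>k > r\<close>: \<open>laguerre\<close> vanishes in negative degree.\<close>

definition laguerre_taylor :: "complex \<Rightarrow> nat \<Rightarrow> nat \<Rightarrow> complex" where
  "laguerre_taylor a r k = (-1)^(r+k) * fact r / fact k * laguerre (Suc k) (int r - int k) a"

lemma laguerre_taylor_self: "laguerre_taylor a r r = 1"
  by (simp add: laguerre_taylor_def laguerre_def)

lemma laguerre_taylor_above: "r < k \<Longrightarrow> laguerre_taylor a r k = 0"
  by (simp add: laguerre_taylor_def laguerre_def)

lemma monic_laguerre_taylor:
  assumes "r < N"
  shows "monic_laguerre r = (\<Sum>k<N. Polynomial.smult (laguerre_taylor a r k) ([:-a,1:]^k))"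
proof -
  have "laguerre_taylor a r k = (-1)^r * fact r * ((-1)^k * poly (laguerre_poly (Suc k) (r - k)) a / fact k)"
    if "k \<le> r" for k
    using that laguerre_eq_poly_laguerre_poly[of "Suc k" "r - k" a]
    by (simp add: laguerre_taylor_def of_nat_diff power_add)
  then have "monic_laguerre r = (\<Sum>k\<le>r. Polynomial.smult (laguerre_taylor a r k) ([:-a,1:]^k))"
    unfolding monic_laguerre_def laguerre_poly_taylor[of r a]
    by (simp add: smult_sum_right mult.assoc)
  also have "\<dots> = (\<Sum>k<N. Polynomial.smult (laguerre_taylor a r k) ([:-a,1:]^k))"
    using assms by (intro sum.mono_neutral_left) (auto simp: laguerre_taylor_above)
  finally show ?thesis .
qed

section \<open>Determinant identities\<close>

lemma index_mult_mat_eq_sum: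
  assumes "A \<in> carrier_mat k N" "B \<in> carrier_mat N m" "i < k" "j < m"
  shows "(A * B) $$ (i,j) = (\<Sum>r<N. A $$ (i,r) * B $$ (r,j))"
  using assms by (simp add: scalar_prod_def atLeast0LessThan)

lemma det_mat_eq_sum_permutations:
  "Determinant.det (Matrix.mat n n (\<lambda>(i,j). g i j))
    = (\<Sum>\<pi>\<in>{p. p permutes {0..<n}}. of_int (sign \<pi>) * (\<Prod>i\<in>{0..<n}. g i (\<pi> i)))"
  using det_def'[of "Matrix.mat n n (\<lambda>(i,j). g i j)" n] by simp

lemma det_mat_scale:
  fixes g :: "nat \<Rightarrow> nat \<Rightarrow> 'a::comm_ring_1"
  shows "Determinant.det (Matrix.mat n n (\<lambda>(i,j). c i * d j * g i j))
    = (\<Prod>i<n. c i) * (\<Prod>j<n. d j) * Determinant.det (Matrix.mat n n (\<lambda>(i,j). g i j))"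
proof -
  have "of_int (sign \<pi>) * (\<Prod>i\<in>{0..<n}. c i * d (\<pi> i) * g i (\<pi> i)) =
      (\<Prod>i<n. c i) * (\<Prod>j<n. d j) * (of_int (sign \<pi>) * (\<Prod>i\<in>{0..<n}. g i (\<pi> i)))"
    if \<pi>: "\<pi> permutes {0..<n}" for \<pi>
  proof -
    have "(\<Prod>i\<in>{0..<n}. d (\<pi> i)) = (\<Prod>j\<in>{0..<n}. d j)"
      using prod.permute[OF \<pi>, of d] by (simp add: o_def)
    then show ?thesis by (simp add: prod.distrib atLeast0LessThan algebra_simps)
  qed
  then show ?thesis
    by (simp add: det_mat_eq_sum_permutations sum_distrib_left)
qed

text \<open>The inner sum does not depend on \<open>\<sigma>\<close>: substitute \<open>\<tau> = \<pi> \<circ> \<sigma>\<close>.\<close>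

lemma sum_permutations_sign_prod_hankel:
  fixes f :: "nat \<Rightarrow> 'a::comm_ring_1"
  shows "(\<Sum>\<sigma>\<in>{p. p permutes {0..<n}}. \<Sum>\<tau>\<in>{p. p permutes {0..<n}}.
      of_int (sign \<sigma>) * of_int (sign \<tau>) * (\<Prod>k\<in>{0..<n}. f (\<sigma> k + \<tau> k)))
    = of_nat (fact n) * Determinant.det (Matrix.mat n n (\<lambda>(i,j). f (i+j)))"
proof -
  let ?U = "{0..<n}"
  let ?D = "Determinant.det (Matrix.mat n n (\<lambda>(i,j). f (i+j)))"
  have "(\<Sum>\<tau>\<in>{p. p permutes ?U}. of_int (sign \<sigma>) * of_int (sign \<tau>) * (\<Prod>k\<in>?U. f (\<sigma> k + \<tau> k))) = ?D"
    if \<sigma>: "\<sigma> permutes ?U" for \<sigma>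
  proof -
    have "(\<Sum>\<tau>\<in>{p. p permutes ?U}. of_int (sign \<sigma>) * of_int (sign \<tau>) * (\<Prod>k\<in>?U. f (\<sigma> k + \<tau> k)))
      = (\<Sum>\<pi>\<in>{p. p permutes ?U}. of_int (sign \<sigma>) * of_int (sign (\<pi> \<circ> \<sigma>)) * (\<Prod>k\<in>?U. f (\<sigma> k + (\<pi> \<circ> \<sigma>) k)))"
      by (rule sum_permutations_compose_right[OF \<sigma>])
    also have "\<dots> = (\<Sum>\<pi>\<in>{p. p permutes ?U}. of_int (sign \<pi>) * (\<Prod>i\<in>?U. f (i + \<pi> i)))"
    proof (rule sum.cong[OF refl])
      fix \<pi> assume "\<pi> \<in> {p. p permutes ?U}"
      then have \<pi>: "\<pi> permutes ?U" by simp
      have "(\<Prod>k\<in>?U. f (\<sigma> k + (\<pi> \<circ> \<sigma>) k)) = (\<Prod>i\<in>?U. f (i + \<pi> i))"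
        using prod.permute[OF \<sigma>, of "\<lambda>i. f (i + \<pi> i)"] by (simp add: o_def)
      moreover have "(of_int (sign \<sigma>) :: 'a) * of_int (sign \<sigma>) = 1"
        by (simp add: sign_def)
      ultimately show "of_int (sign \<sigma>) * of_int (sign (\<pi> \<circ> \<sigma>)) * (\<Prod>k\<in>?U. f (\<sigma> k + (\<pi> \<circ> \<sigma>) k)) =
         of_int (sign \<pi>) * (\<Prod>i\<in>?U. f (i + \<pi> i))"
        by (simp add: signof_compose[OF \<pi> \<sigma>] algebra_simps)
    qed
    also have "\<dots> = ?D" by (rule det_mat_eq_sum_permutations[symmetric])
    finally show ?thesis .
  qed
  then have "(\<Sum>\<sigma>\<in>{p. p permutes ?U}. \<Sum>\<tau>\<in>{p. p permutes ?U}.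
      of_int (sign \<sigma>) * of_int (sign \<tau>) * (\<Prod>k\<in>?U. f (\<sigma> k + \<tau> k))) = of_nat (card {p. p permutes ?U}) * ?D"
    by simp
  also have "card {p. p permutes ?U} = fact n" by (rule card_permutations) auto
  finally show ?thesis .
qed

lemma det_unitriangular_coeff_mat:
  assumes "\<And>i. i < n \<Longrightarrow> degree (p i) \<le> i" "\<And>i. i < n \<Longrightarrow> coeff (p i) i = 1"
  shows "Determinant.det (Matrix.mat n n (\<lambda>(i,m). coeff (p i) m)) = 1"
    and "Determinant.det (Matrix.mat n n (\<lambda>(m,j). coeff (p j) m)) = 1"
proof -
  let ?C = "Matrix.mat n n (\<lambda>(i,m). coeff (p i) m)"
  have "Determinant.det ?C = prod_list (diag_mat ?C)"
  proof (rule det_lower_triangular[of n])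
    fix i j :: nat assume ij: "i < j" "j < n"
    then have "degree (p i) < j" using assms(1)[of i] by simp
    then show "?C $$ (i,j) = 0" using ij by (simp add: coeff_eq_0)
  qed simp
  also have "\<dots> = 1" by (simp add: prod_list_diag_prod assms(2))
  finally show "Determinant.det ?C = 1" .
  have "Matrix.mat n n (\<lambda>(m,j). coeff (p j) m) = transpose_mat ?C"
    by (rule eq_matI) auto
  then show "Determinant.det (Matrix.mat n n (\<lambda>(m,j). coeff (p j) m)) = 1"
    using \<open>Determinant.det ?C = 1\<close> det_transpose[of ?C n] by simp
qed

lemma det_identity_columns_block:
  fixes f :: "nat \<Rightarrow> nat \<Rightarrow> 'a::idom"
  shows "Determinant.det (Matrix.mat (k+m) (k+m)
      (\<lambda>(r,c). if c < k then (if r = c then 1 else 0) else f r (c - k)))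
    = Determinant.det (Matrix.mat m m (\<lambda>(i,j). f (k+i) j))"
proof -
  have "Matrix.mat (k+m) (k+m) (\<lambda>(r,c). if c < k then (if r = c then 1 else 0) else f r (c - k))
    = four_block_mat (1\<^sub>m k) (Matrix.mat k m (\<lambda>(r,c). f r c)) (0\<^sub>m m k) (Matrix.mat m m (\<lambda>(i,j). f (k+i) j))"
    by (rule eq_matI) auto
  then show ?thesis
    by (simp add: det_four_block_mat_lower_left_zero[of _ k _ m])
qed

lemma mult_identity_columns_left_inverse:
  fixes S T :: "'a::comm_ring_1 mat"
  assumes T: "T \<in> carrier_mat N N" and S: "S \<in> carrier_mat N N" and TS: "T * S = 1\<^sub>m N"
  shows "T * Matrix.mat N N (\<lambda>(r,c). if c < n then (if r = c then 1 else 0) else S $$ (r, c-n))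
    = Matrix.mat N N (\<lambda>(r,c). if c < n then T $$ (r,c) else (if r = c - n then 1 else 0))"
    (is "T * ?Y = ?Z")
proof (rule eq_matI)
  fix r c assume "r < dim_row ?Z" "c < dim_col ?Z"
  then have r: "r < N" and c: "c < N" by auto
  have Y: "?Y \<in> carrier_mat N N" by simp
  show "(T * ?Y) $$ (r,c) = ?Z $$ (r,c)"
  proof (cases "c < n")
    case True
    then have "(\<Sum>i<N. T $$ (r,i) * ?Y $$ (i,c)) = (\<Sum>i<N. if i = c then T $$ (r,c) else 0)"
      using c by (intro sum.cong refl) auto
    then show ?thesis
      using True c r by (simp add: index_mult_mat_eq_sum[OF T Y r c])
  next
    case False
    then have cn: "c - n < N" using c by simp
    have "(\<Sum>i<N. T $$ (r,i) * ?Y $$ (i,c)) = (\<Sum>i<N. T $$ (r,i) * S $$ (i,c-n))"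
      using False c by (intro sum.cong refl) auto
    also have "\<dots> = (T * S) $$ (r, c-n)" by (rule index_mult_mat_eq_sum[symmetric, OF T S r cn])
    finally show ?thesis
      using TS False c r cn by (simp add: index_mult_mat_eq_sum[OF T Y r c])
  qed
qed (use T in auto)

text \<open>Jacobi's complementary minor theorem for \<open>det S = 1\<close>.\<close>

lemma det_complementary_minor:
  fixes S T :: "'a::idom mat"
  assumes S: "S \<in> carrier_mat (n+\<alpha>) (n+\<alpha>)" and T: "T \<in> carrier_mat (n+\<alpha>) (n+\<alpha>)"
    and TS: "T * S = 1\<^sub>m (n+\<alpha>)" and det_S: "Determinant.det S = 1"
  shows "Determinant.det (Matrix.mat n n (\<lambda>(i,j). T $$ (i+\<alpha>, j)))
       = (-1)^(n*\<alpha>) * Determinant.det (Matrix.mat \<alpha> \<alpha> (\<lambda>(i,j). S $$ (n+i, j)))"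
proof -
  define N where "N = n + \<alpha>"
  define Y where "Y = Matrix.mat N N (\<lambda>(r,c). if c < n then (if r = c then 1 else 0) else S $$ (r, c-n))"
  define Z where "Z = Matrix.mat N N (\<lambda>(r,c). if c < n then T $$ (r,c) else (if r = c - n then 1 else 0))"
  have TN: "T \<in> carrier_mat N N" and SN: "S \<in> carrier_mat N N" and YN: "Y \<in> carrier_mat N N"
    using T S by (auto simp: N_def Y_def)
  have "Determinant.det T = 1"
    using det_mult[OF T S] TS det_S by simp
  then have "Determinant.det Z = Determinant.det Y"
    using det_mult[OF TN YN] mult_identity_columns_left_inverse[OF TN SN TS[folded N_def]]
    by (simp add: Y_def Z_def)
  also have "Determinant.det Y = Determinant.det (Matrix.mat \<alpha> \<alpha> (\<lambda>(i,j). S $$ (n+i, j)))"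
    unfolding Y_def N_def by (rule det_identity_columns_block)
  finally have det_Z: "Determinant.det Z = Determinant.det (Matrix.mat \<alpha> \<alpha> (\<lambda>(i,j). S $$ (n+i, j)))" .
  have "Determinant.det Z = (-1)^(n*\<alpha>) * Determinant.det (Matrix.mat N N
      (\<lambda>(i, j). Z $$ (i, if j < \<alpha> then j + n else if j < n + \<alpha> then j - \<alpha> else j)))"
    by (rule det_swap_initial_cols) (auto simp: Z_def N_def)
  also have "Matrix.mat N N (\<lambda>(i, j). Z $$ (i, if j < \<alpha> then j + n else if j < n + \<alpha> then j - \<alpha> else j))
      = Matrix.mat (\<alpha>+n) (\<alpha>+n) (\<lambda>(r,c). if c < \<alpha> then (if r = c then 1 else 0) else T $$ (r, c - \<alpha>))"
    by (rule eq_matI) (auto simp: Z_def N_def)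
  also have "Determinant.det \<dots> = Determinant.det (Matrix.mat n n (\<lambda>(i,j). T $$ (i+\<alpha>, j)))"
    by (subst det_identity_columns_block) (simp add: add.commute)
  finally have "Determinant.det Z = (-1)^(n*\<alpha>) * Determinant.det (Matrix.mat n n (\<lambda>(i,j). T $$ (i+\<alpha>, j)))" .
  moreover have "(-1::'a)^(n*\<alpha>) * (-1)^(n*\<alpha>) = 1"
    by (metis mult_2 power_add power_minus1_even)
  ultimately show ?thesis
    by (simp add: det_Z[symmetric] mult.assoc[symmetric])
qed

lemma Delta_Suc: "Delta (Suc n) y = (\<Prod>k<n. y (Suc k) - y 0) * Delta n (\<lambda>i. y (Suc i))"
proof -
  have "Delta (Suc n) y = (\<Prod>k<n. \<Prod>i<Suc k. y (Suc k) - y i)"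
    unfolding Delta_def by (subst prod.lessThan_Suc_shift) simp
  also have "\<dots> = (\<Prod>k<n. (y (Suc k) - y 0) * (\<Prod>i<k. y (Suc k) - y (Suc i)))"
    by (subst prod.lessThan_Suc_shift) simp
  finally show ?thesis by (simp add: prod.distrib Delta_def)
qed

text \<open>Subtract \<open>y 0\<close> times each column from the next one.\<close>

lemma vandermonde_mult_bidiagonal:
  fixes y :: "nat \<Rightarrow> 'a::comm_ring_1"
  shows "Matrix.mat (Suc n) (Suc n) (\<lambda>(k,i). y k ^ i)
     * Matrix.mat (Suc n) (Suc n) (\<lambda>(r,c). if r = c then 1 else if Suc r = c then - y 0 else 0)
   = four_block_mat (1\<^sub>m 1) (0\<^sub>m 1 n) (Matrix.mat n 1 (\<lambda>_. 1))
       (Matrix.mat n n (\<lambda>(k,c). (y (Suc k) - y 0) * 1 * y (Suc k) ^ c))"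
  (is "?V * ?E = ?B")
proof (rule eq_matI)
  fix k c assume "k < dim_row ?B" "c < dim_col ?B"
  then have k: "k < Suc n" and c: "c < Suc n" by auto
  have "(?V * ?E) $$ (k,c) = (\<Sum>r<Suc n. ?V $$ (k,r) * ?E $$ (r,c))"
    by (rule index_mult_mat_eq_sum) (use k c in auto)
  also have "\<dots> = (\<Sum>r<Suc n. (if r = c then y k ^ r else 0) + (if Suc r = c then - y 0 * y k ^ r else 0))"
    by (intro sum.cong refl) (use k c in auto)
  also have "\<dots> = y k ^ c + (if c = 0 then 0 else - y 0 * y k ^ (c - 1))"
  proof -
    have "(\<Sum>r<Suc n. (if Suc r = c then - y 0 * y k ^ r else 0)) = (if c = 0 then 0 else - y 0 * y k ^ (c - 1))"
      using c by (cases c) (auto intro: sum.neutral)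
    then show ?thesis using c by (simp add: sum.distrib)
  qed
  also have "\<dots> = ?B $$ (k,c)"
    using k c by (cases c; cases k) (auto simp: left_diff_distrib)
  finally show "(?V * ?E) $$ (k,c) = ?B $$ (k,c)" .
qed auto

lemma det_vandermonde: "Determinant.det (Matrix.mat n n (\<lambda>(k,i). y k ^ i)) = Delta n y"
proof (induction n arbitrary: y)
  case 0
  then show ?case by (simp add: Delta_def det_def')
next
  case (Suc n)
  define E where "E = Matrix.mat (Suc n) (Suc n) (\<lambda>(r,c). if r = c then 1 else if Suc r = c then - y 0 else 0)"
  have E: "E \<in> carrier_mat (Suc n) (Suc n)" by (simp add: E_def)
  have "upper_triangular E" by (auto simp: upper_triangular_def E_def)
  then have "Determinant.det E = prod_list (diag_mat E)"
    by (rule det_upper_triangular[OF _ E])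
  also have "\<dots> = 1" by (simp add: prod_list_diag_prod E_def)
  finally have "Determinant.det E = 1" .
  then have "Determinant.det (Matrix.mat (Suc n) (Suc n) (\<lambda>(k,i). y k ^ i))
      = Determinant.det (Matrix.mat (Suc n) (Suc n) (\<lambda>(k,i). y k ^ i) * E)"
    using det_mult[OF _ E] by simp
  also have "\<dots> = Determinant.det (Matrix.mat n n (\<lambda>(k,c). (y (Suc k) - y 0) * 1 * y (Suc k) ^ c))"
    unfolding E_def vandermonde_mult_bidiagonal
    by (subst det_four_block_mat_upper_right_zero) auto
  also have "\<dots> = (\<Prod>k<n. y (Suc k) - y 0) * Delta n (\<lambda>i. y (Suc i))"
    unfolding det_mat_scale Suc.IH by simp
  finally show ?case by (simp add: Delta_Suc)
qed

lemma det_moment_functional_monic_bases: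
  assumes p: "\<And>i. i < n \<Longrightarrow> degree (p i) \<le> i" "\<And>i. i < n \<Longrightarrow> coeff (p i) i = 1"
    and q: "\<And>j. j < n \<Longrightarrow> degree (q j) \<le> j" "\<And>j. j < n \<Longrightarrow> coeff (q j) j = 1"
  shows "Determinant.det (Matrix.mat n n (\<lambda>(i,j). moment_functional (p i * w * q j)))
    = Determinant.det (Matrix.mat n n (\<lambda>(i,j). moment_functional (monom 1 i * w * monom 1 j)))"
proof -
  define C where "C = Matrix.mat n n (\<lambda>(i,m). coeff (p i) m)"
  define D where "D = Matrix.mat n n (\<lambda>(m,j). coeff (q j) m)"
  define A where "A = Matrix.mat n n (\<lambda>(i,j). moment_functional (monom 1 i * w * monom 1 j))"
  have CDA: "C \<in> carrier_mat n n" "D \<in> carrier_mat n n" "A \<in> carrier_mat n n"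
    by (auto simp: C_def D_def A_def)
  have CA: "C * A = Matrix.mat n n (\<lambda>(i,j). moment_functional (p i * (w * monom 1 j)))" (is "_ = ?CA")
  proof (rule eq_matI)
    fix i j assume "i < dim_row ?CA" "j < dim_col ?CA"
    then have i: "i < n" and j: "j < n" by auto
    have "(C * A) $$ (i,j) = (\<Sum>m<n. C $$ (i,m) * A $$ (m,j))"
      by (rule index_mult_mat_eq_sum[OF CDA(1,3) i j])
    also have "\<dots> = (\<Sum>m<n. coeff (p i) m * moment_functional (monom 1 m * (w * monom 1 j)))"
      using i j by (intro sum.cong refl) (auto simp: C_def A_def mult.assoc)
    also have "\<dots> = moment_functional (p i * (w * monom 1 j))"
      using p(1)[OF i] i by (intro moment_functional_mult_eq_sum[symmetric]) simp
    finally show "(C * A) $$ (i,j) = ?CA $$ (i,j)"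
      using i j by simp
  qed (auto simp: C_def A_def)
  have CAD: "C * A * D = Matrix.mat n n (\<lambda>(i,j). moment_functional (p i * w * q j))" (is "_ = ?CAD")
  proof (rule eq_matI)
    fix i j assume "i < dim_row ?CAD" "j < dim_col ?CAD"
    then have i: "i < n" and j: "j < n" by auto
    have CA_n: "C * A \<in> carrier_mat n n" using CDA by simp
    have "(C * A * D) $$ (i,j) = (\<Sum>m<n. (C * A) $$ (i,m) * D $$ (m,j))"
      by (rule index_mult_mat_eq_sum[OF CA_n CDA(2) i j])
    also have "\<dots> = (\<Sum>m<n. coeff (q j) m * moment_functional (monom 1 m * (p i * w)))"
      using i j by (intro sum.cong refl) (auto simp: CA D_def ac_simps)
    also have "\<dots> = moment_functional (q j * (p i * w))"
      using q(1)[OF j] j by (intro moment_functional_mult_eq_sum[symmetric]) simp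
    finally show "(C * A * D) $$ (i,j) = ?CAD $$ (i,j)"
      using i j by (simp add: ac_simps)
  qed (auto simp: C_def D_def)
  have "Determinant.det C = 1" "Determinant.det D = 1"
    unfolding C_def D_def using det_unitriangular_coeff_mat p q by auto
  then show ?thesis
    using CDA by (simp flip: CAD A_def add: det_mult[of _ n] mult_carrier_mat)
qed

section \<open>The Hankel determinant of the moments\<close>

definition laguerre_moment :: "complex \<Rightarrow> nat \<Rightarrow> nat \<Rightarrow> complex" where
  "laguerre_moment a \<alpha> m = moment_functional (monom 1 m * [:a, -1:]^\<alpha>)"

lemma det_hankel_laguerre_moment_eq_shifted_gram:
  "Determinant.det (Matrix.mat n n (\<lambda>(i,j). laguerre_moment a \<alpha> (i+j)))
    = (-1)^(\<alpha>*n) * Determinant.det (Matrix.mat n n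
        (\<lambda>(i,j). moment_functional (monic_laguerre i * [:-a,1:]^(j+\<alpha>))))"
proof -
  have "[:a,-1:] = Polynomial.smult (-1) [:-a,1:]" by simp
  then have w: "[:a,-1:]^\<alpha> = Polynomial.smult ((-1)^\<alpha>) ([:-a,1:]^\<alpha>)"
    by (simp only: smult_power)
  have "Matrix.mat n n (\<lambda>(i,j). laguerre_moment a \<alpha> (i+j))
      = Matrix.mat n n (\<lambda>(i,j). moment_functional (monom 1 i * [:a,-1:]^\<alpha> * monom 1 j))"
  proof -
    have monoms: "monom 1 i * w * monom 1 j = monom 1 (i+j) * w" for i j and w :: "complex poly"
      by (simp add: mult.commute mult.left_commute mult_monom)
    show ?thesis by (intro eq_matI) (auto simp: laguerre_moment_def monoms)
  qed
  also have "Determinant.det \<dots>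
      = Determinant.det (Matrix.mat n n (\<lambda>(i,j). moment_functional (monic_laguerre i * [:a,-1:]^\<alpha> * [:-a,1:]^j)))"
    by (rule det_moment_functional_monic_bases[symmetric])
      (auto simp: degree_monic_laguerre coeff_monic_laguerre_self degree_linear_power coeff_linear_power)
  also have "Matrix.mat n n (\<lambda>(i,j). moment_functional (monic_laguerre i * [:a,-1:]^\<alpha> * [:-a,1:]^j))
      = Matrix.mat n n (\<lambda>(i,j). (-1)^\<alpha> * 1 * moment_functional (monic_laguerre i * [:-a,1:]^(j+\<alpha>)))"
    by (rule eq_matI) (auto simp: w moment_functional_smult mult_smult_left mult_smult_right power_add ac_simps)
  finally show ?thesis
    by (simp only: det_mat_scale) (simp add: power_mult)
qed

text \<open>Row \<open>r\<close> holds the coordinates of \<open>monic_laguerre r\<close> in the basis \<open>(x - a)^k\<close>; its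
  inverse expresses the \<open>(x - a)^k\<close> through the orthogonal basis.\<close>

definition taylor_mat :: "complex \<Rightarrow> nat \<Rightarrow> complex mat" where
  "taylor_mat a N = Matrix.mat N N (\<lambda>(r,k). laguerre_taylor a r k)"

lemma taylor_mat_carrier: "taylor_mat a N \<in> carrier_mat N N"
  by (simp add: taylor_mat_def)

lemma det_taylor_mat: "Determinant.det (taylor_mat a N) = 1"
proof -
  have "Determinant.det (taylor_mat a N) = prod_list (diag_mat (taylor_mat a N))"
    by (rule det_lower_triangular[OF _ taylor_mat_carrier])
      (simp add: taylor_mat_def laguerre_taylor_above)
  also have "\<dots> = 1" by (simp add: prod_list_diag_prod taylor_mat_def laguerre_taylor_self)
  finally show ?thesis .
qed

lemma power_eq_sum_monic_laguerre:
  assumes T: "T \<in> carrier_mat N N" and TS: "T * taylor_mat a N = 1\<^sub>m N" and k: "k < N"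
  shows "[:-a,1:]^k = (\<Sum>r<N. Polynomial.smult (T $$ (k,r)) (monic_laguerre r))"
proof -
  have "(\<Sum>r<N. Polynomial.smult (T $$ (k,r)) (monic_laguerre r))
      = (\<Sum>r<N. \<Sum>l<N. Polynomial.smult (T $$ (k,r) * laguerre_taylor a r l) ([:-a,1:]^l))"
    by (intro sum.cong refl) (simp add: monic_laguerre_taylor[of _ N a] smult_sum_right)
  also have "\<dots> = (\<Sum>l<N. Polynomial.smult (\<Sum>r<N. T $$ (k,r) * laguerre_taylor a r l) ([:-a,1:]^l))"
    by (subst sum.swap) (simp add: smult_sum)
  also have "\<dots> = (\<Sum>l<N. if k = l then [:-a,1:]^l else 0)"
  proof (intro sum.cong refl)
    fix l assume "l \<in> {..<N}"
    then have l: "l < N" by simp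
    have "(\<Sum>r<N. T $$ (k,r) * laguerre_taylor a r l) = (T * taylor_mat a N) $$ (k,l)"
      using l by (subst index_mult_mat_eq_sum[OF T taylor_mat_carrier k l])
        (auto intro!: sum.cong simp: taylor_mat_def)
    then show "Polynomial.smult (\<Sum>r<N. T $$ (k,r) * laguerre_taylor a r l) ([:-a,1:]^l)
        = (if k = l then [:-a,1:]^l else 0)"
      using TS k l by simp
  qed
  also have "\<dots> = [:-a,1:]^k" using k by simp
  finally show ?thesis by simp
qed

lemma det_shifted_gram_eq_inverse_minor:
  assumes T: "T \<in> carrier_mat (n+\<alpha>) (n+\<alpha>)" and TS: "T * taylor_mat a (n+\<alpha>) = 1\<^sub>m (n+\<alpha>)"
  shows "Determinant.det (Matrix.mat n n (\<lambda>(i,j). moment_functional (monic_laguerre i * [:-a,1:]^(j+\<alpha>))))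
    = (\<Prod>i<n. fact i * fact (Suc i)) * Determinant.det (Matrix.mat n n (\<lambda>(i,j). T $$ (i+\<alpha>, j)))"
proof -
  have entry: "moment_functional (monic_laguerre i * [:-a,1:]^(j+\<alpha>))
      = fact i * fact (Suc i) * 1 * T $$ (j+\<alpha>, i)" if i: "i < n" and j: "j < n" for i j
  proof -
    have "moment_functional (monic_laguerre i * [:-a,1:]^(j+\<alpha>))
        = (\<Sum>r<n+\<alpha>. T $$ (j+\<alpha>,r) * moment_functional (monic_laguerre i * monic_laguerre r))"
      using j by (simp add: power_eq_sum_monic_laguerre[OF T TS] sum_distrib_left moment_functional_sum
          moment_functional_smult mult_smult_right)
    also have "\<dots> = (\<Sum>r<n+\<alpha>. if r = i then T $$ (j+\<alpha>,i) * (fact i * fact (Suc i)) else 0)"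
      by (intro sum.cong refl) (auto simp: moment_functional_monic_laguerre_orthogonal)
    finally show ?thesis using i by simp
  qed
  have "Matrix.mat n n (\<lambda>(i,j). moment_functional (monic_laguerre i * [:-a,1:]^(j+\<alpha>)))
      = Matrix.mat n n (\<lambda>(i,j). fact i * fact (Suc i) * 1 * T $$ (j+\<alpha>, i))"
    by (rule eq_matI) (auto simp: entry)
  also have "Determinant.det \<dots>
      = (\<Prod>i<n. fact i * fact (Suc i)) * (\<Prod>j<n. 1) * Determinant.det (Matrix.mat n n (\<lambda>(i,j). T $$ (j+\<alpha>, i)))"
    by (rule det_mat_scale)
  also have "Matrix.mat n n (\<lambda>(i,j). T $$ (j+\<alpha>, i)) = transpose_mat (Matrix.mat n n (\<lambda>(i,j). T $$ (i+\<alpha>, j)))"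
    by (rule eq_matI) auto
  finally show ?thesis
    by (simp add: det_transpose[of _ n] del: fact_Suc)
qed

lemma det_taylor_mat_minor:
  "Determinant.det (Matrix.mat \<alpha> \<alpha> (\<lambda>(i,j). taylor_mat a (n+\<alpha>) $$ (n+i, j)))
    = (-1)^(n*\<alpha>) * (\<Prod>j<\<alpha>. of_nat (fact (n+j)) / of_nat (fact j))
      * Determinant.det (Matrix.mat \<alpha> \<alpha> (\<lambda>(i, j). laguerre (j + 1) (int n + int i - int j) a))"
proof -
  have "Matrix.mat \<alpha> \<alpha> (\<lambda>(i,j). taylor_mat a (n+\<alpha>) $$ (n+i, j)) = Matrix.mat \<alpha> \<alpha> (\<lambda>(i,j).
      ((-1)^(n+i) * fact (n+i)) * ((-1)^j / fact j) * laguerre (j + 1) (int n + int i - int j) a)"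
    by (rule eq_matI) (auto simp: taylor_mat_def laguerre_taylor_def power_add)
  then have "Determinant.det (Matrix.mat \<alpha> \<alpha> (\<lambda>(i,j). taylor_mat a (n+\<alpha>) $$ (n+i, j)))
      = (\<Prod>i<\<alpha>. (-1)^(n+i) * fact (n+i)) * (\<Prod>j<\<alpha>. (-1)^j / fact j)
        * Determinant.det (Matrix.mat \<alpha> \<alpha> (\<lambda>(i, j). laguerre (j + 1) (int n + int i - int j) a))"
    by (simp only: det_mat_scale)
  also have "(\<Prod>i<\<alpha>. (-1)^(n+i) * fact (n+i)) * (\<Prod>j<\<alpha>. (-1)^j / fact j)
      = (\<Prod>i<\<alpha>. (-1)^n * (fact (n+i) / fact i) :: complex)"
    unfolding prod.distrib[symmetric]
  proof (intro prod.cong refl)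
    fix i
    have "(-1::complex)^(n+i) * (-1)^i = (-1)^n"
      by (simp add: power_add mult.assoc power_mult_distrib[symmetric])
    then show "(-1)^(n+i) * fact (n+i) * ((-1)^i / fact i) = (-1::complex)^n * (fact (n+i) / fact i)"
      by (simp add: field_simps)
  qed
  finally show ?thesis
    by (simp add: prod.distrib power_mult prod_dividef)
qed

lemma fact_mult_prod_fact_mult_fact_Suc:
  "of_nat (fact n) * (\<Prod>i<n. fact i * fact (Suc i)) = (\<Prod>j<n. (of_nat (fact (j+1)))\<^sup>2 :: 'a::{comm_semiring_1,semiring_char_0})"
proof (induction n)
  case (Suc n)
  have "of_nat (fact (Suc n)) * (\<Prod>i<Suc n. fact i * fact (Suc i)) =
      (of_nat (fact n) * (\<Prod>i<n. fact i * fact (Suc i))) * (of_nat (Suc n) * (fact n * fact (Suc n)) :: 'a)"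
    by (simp add: algebra_simps)
  also have "\<dots> = (\<Prod>j<n. (of_nat (fact (j+1)))\<^sup>2) * (of_nat (fact (Suc n)))\<^sup>2"
    unfolding Suc by (simp add: power2_eq_square algebra_simps)
  finally show ?case by simp
qed simp

theorem det_hankel_laguerre_moment:
  "of_nat (fact n) * Determinant.det (Matrix.mat n n (\<lambda>(i,j). laguerre_moment a \<alpha> (i+j)))
   = (-1) ^ (n * \<alpha>) * (\<Prod>j<n. (of_nat (fact (j + 1)))\<^sup>2)
    * (\<Prod>j<\<alpha>. of_nat (fact (n + j)) / of_nat (fact j))
    * Determinant.det (Matrix.mat \<alpha> \<alpha> (\<lambda>(i, j). laguerre (j + 1) (int n + int i - int j) a))"
proof -
  obtain T where T: "T \<in> carrier_mat (n+\<alpha>) (n+\<alpha>)" and TS: "T * taylor_mat a (n+\<alpha>) = 1\<^sub>m (n+\<alpha>)"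
  proof -
    have "taylor_mat a (n+\<alpha>) \<in> Units (ring_mat TYPE(complex) (n+\<alpha>) undefined)"
      by (rule det_non_zero_imp_unit[OF taylor_mat_carrier]) (simp add: det_taylor_mat)
    then show ?thesis using that unfolding Units_def ring_mat_def by auto
  qed
  have "of_nat (fact n) * Determinant.det (Matrix.mat n n (\<lambda>(i,j). laguerre_moment a \<alpha> (i+j)))
     = (-1)^(\<alpha>*n) * (-1)^(n*\<alpha>) * (-1)^(n*\<alpha>) * (of_nat (fact n) * (\<Prod>i<n. fact i * fact (Suc i)))
       * (\<Prod>j<\<alpha>. of_nat (fact (n+j)) / of_nat (fact j))
       * Determinant.det (Matrix.mat \<alpha> \<alpha> (\<lambda>(i, j). laguerre (j + 1) (int n + int i - int j) a))"
    unfolding det_hankel_laguerre_moment_eq_shifted_gram det_shifted_gram_eq_inverse_minor[OF T TS]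
      det_complementary_minor[OF taylor_mat_carrier T TS det_taylor_mat] det_taylor_mat_minor
    by (simp add: ac_simps)
  also have "(-1::complex)^(\<alpha>*n) * (-1)^(n*\<alpha>) = 1"
    by (simp add: mult.commute[of \<alpha> n] power_mult_distrib[symmetric])
  also have "of_nat (fact n) * (\<Prod>i<n. fact i * fact (Suc i)) = (\<Prod>j<n. (of_nat (fact (j+1)))\<^sup>2 :: complex)"
    by (rule fact_mult_prod_fact_mult_fact_Suc)
  finally show ?thesis by simp
qed

section \<open>The integral\<close>

lemma has_bochner_integral_moment_functional:
  "has_bochner_integral lborel
     (\<lambda>t::real. indicator {0..} t *\<^sub>R (complex_of_real (exp (- t) * t) * poly q (complex_of_real t)))
     (moment_functional q)"
proof -
  have "has_bochner_integral lborel
     (\<lambda>t::real. \<Sum>k\<le>degree q. complex_of_real (t ^ Suc k * exp (-t) * indicator {0..} t) * coeff q k)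
     (\<Sum>k\<le>degree q. complex_of_real (fact (Suc k)) * coeff q k)"
    by (intro has_bochner_integral_sum has_bochner_integral_mult_left has_bochner_integral_of_real
        has_bochner_integral_I0i_power_exp_m')
  moreover have "(\<Sum>k\<le>degree q. complex_of_real (fact (Suc k)) * coeff q k) = moment_functional q"
    unfolding moment_functional_def by (intro sum.cong refl) (simp add: mult.commute)
  moreover have "(\<lambda>t::real. \<Sum>k\<le>degree q. complex_of_real (t ^ Suc k * exp (-t) * indicator {0..} t) * coeff q k)
     = (\<lambda>t::real. indicator {0..} t *\<^sub>R (complex_of_real (exp (- t) * t) * poly q (complex_of_real t)))"
    by (rule ext) (simp add: poly_altdef scaleR_conv_of_real sum_distrib_left sum_distrib_right algebra_simps)
  ultimately show ?thesis by simp
qed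

lemma Delta_eq_sum_permutations:
  "complex_of_real (Delta n y)
    = (\<Sum>\<sigma>\<in>{p. p permutes {0..<n}}. of_int (sign \<sigma>) * (\<Prod>k<n. complex_of_real (y k) ^ \<sigma> k))"
proof -
  have "Delta n y = (\<Sum>\<sigma>\<in>{p. p permutes {0..<n}}. of_int (sign \<sigma>) * (\<Prod>k\<in>{0..<n}. y k ^ \<sigma> k))"
    using det_vandermonde[of n y] det_mat_eq_sum_permutations[of n "\<lambda>k i. y k ^ i"] by simp
  then show ?thesis by (simp add: atLeast0LessThan)
qed

lemma indicator_nonneg_coords:
  "indicator {y. \<forall>j<(n::nat). 0 \<le> y j} y = (\<Prod>k<n. indicator {0..} (y k) :: real)"
proof (cases "\<forall>j<n. 0 \<le> y j")
  case False
  then obtain j where "j < n" "\<not> 0 \<le> y j" by auto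
  then have "(\<Prod>k<n. indicator {0..} (y k) :: real) = 0"
    by (intro prod_zero) (auto simp: indicator_def)
  then show ?thesis using False by (simp add: indicator_def)
qed (simp add: indicator_def)

lemma R_integrand_eq_sum_permutations:
  fixes y :: "nat \<Rightarrow> real"
  shows "indicator {y. \<forall>j<n. 0 \<le> y j} y *\<^sub>R
      ((\<Prod>j<n. complex_of_real (exp (- y j) * y j) * (a - complex_of_real (y j)) ^ \<alpha>)
        * complex_of_real ((Delta n y)\<^sup>2))
    = (\<Sum>\<sigma>\<in>{p. p permutes {0..<n}}. \<Sum>\<tau>\<in>{p. p permutes {0..<n}}. of_int (sign \<sigma>) * of_int (sign \<tau>) *
        (\<Prod>k<n. indicator {0..} (y k) *\<^sub>R (complex_of_real (exp (- y k) * y k) *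
            poly (monom 1 (\<sigma> k + \<tau> k) * [:a,-1:]^\<alpha>) (complex_of_real (y k)))))"
proof -
  define I where "I = (\<Prod>k<n. complex_of_real (indicator {0..} (y k)))"
  define E where "E = (\<Prod>j<n. complex_of_real (exp (- y j) * y j) * (a - complex_of_real (y j)) ^ \<alpha>)"
  define V where "V \<sigma> = (\<Prod>k<n. complex_of_real (y k) ^ \<sigma> k)" for \<sigma> :: "nat \<Rightarrow> nat"
  have "(\<Prod>k<n. indicator {0..} (y k) *\<^sub>R (complex_of_real (exp (- y k) * y k) *
        poly (monom 1 (\<sigma> k + \<tau> k) * [:a,-1:]^\<alpha>) (complex_of_real (y k)))) = I * E * (V \<sigma> * V \<tau>)"
    for \<sigma> \<tau>
    unfolding I_def E_def V_def scaleR_conv_of_real prod.distrib[symmetric]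
    by (intro prod.cong refl) (simp add: poly_monom power_add algebra_simps)
  moreover have "complex_of_real ((Delta n y)\<^sup>2) = (\<Sum>\<sigma>\<in>{p. p permutes {0..<n}}. \<Sum>\<tau>\<in>{p. p permutes {0..<n}}.
      of_int (sign \<sigma>) * of_int (sign \<tau>) * (V \<sigma> * V \<tau>))"
  proof -
    have Delta_expand: "complex_of_real (Delta n y) = (\<Sum>\<sigma>\<in>{p. p permutes {0..<n}}. of_int (sign \<sigma>) * V \<sigma>)"
      unfolding V_def by (rule Delta_eq_sum_permutations)
    show ?thesis
      unfolding of_real_power by (subst Delta_expand) (simp add: power2_eq_square sum_product algebra_simps)
  qed
  moreover have "indicator {y. \<forall>j<n. 0 \<le> y j} y *\<^sub>R z = I * z" for z
    unfolding indicator_nonneg_coords I_def scaleR_conv_of_real by simp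
  ultimately show ?thesis
    unfolding E_def[symmetric] by (simp add: sum_distrib_left algebra_simps)
qed

lemma R_int_eq_sum_permutations:
  "R_int n a \<alpha> = (\<Sum>\<sigma>\<in>{p. p permutes {0..<n}}. \<Sum>\<tau>\<in>{p. p permutes {0..<n}}.
      of_int (sign \<sigma>) * of_int (sign \<tau>) * (\<Prod>k\<in>{0..<n}. laguerre_moment a \<alpha> (\<sigma> k + \<tau> k)))"
proof -
  interpret product_sigma_finite "\<lambda>_::nat. lborel :: real measure"
    by (simp add: product_sigma_finite_def lborel.sigma_finite_measure_axioms)
  define M where "M = PiM {..<n} (\<lambda>_::nat. lborel :: real measure)"
  define \<phi> where "\<phi> m t = indicator {0..} t *\<^sub>R (complex_of_real (exp (- t) * t) *
      poly (monom 1 m * [:a,-1:]^\<alpha>) (complex_of_real t))" for m and t :: real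
  have \<phi>: "has_bochner_integral lborel (\<phi> m) (laguerre_moment a \<alpha> m)" for m
    unfolding \<phi>_def laguerre_moment_def by (rule has_bochner_integral_moment_functional)
  then have integrable_\<phi>: "integrable lborel (\<phi> m)" for m
    by (auto simp: has_bochner_integral_iff)
  have integrable_prod: "integrable M (\<lambda>y. \<Prod>k\<in>{..<n}. \<phi> (\<sigma> k + \<tau> k) (y k))" for \<sigma> \<tau> :: "nat \<Rightarrow> nat"
    unfolding M_def by (rule product_integrable_prod) (auto simp: integrable_\<phi>)
  have integral_prod: "integral\<^sup>L M (\<lambda>y. \<Prod>k\<in>{..<n}. \<phi> (\<sigma> k + \<tau> k) (y k))
      = (\<Prod>k\<in>{..<n}. laguerre_moment a \<alpha> (\<sigma> k + \<tau> k))" for \<sigma> \<tau> :: "nat \<Rightarrow> nat"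
    unfolding M_def
    by (subst product_integral_prod) (auto simp: integrable_\<phi> has_bochner_integral_integral_eq[OF \<phi>])
  have "R_int n a \<alpha> = integral\<^sup>L M (\<lambda>y. (\<Sum>\<sigma>\<in>{p. p permutes {0..<n}}. \<Sum>\<tau>\<in>{p. p permutes {0..<n}}.
      of_int (sign \<sigma>) * of_int (sign \<tau>) * (\<Prod>k\<in>{..<n}. \<phi> (\<sigma> k + \<tau> k) (y k))))"
    unfolding R_int_def set_lebesgue_integral_def M_def[symmetric]
    using R_integrand_eq_sum_permutations[of n _ a \<alpha>]
    by (intro Bochner_Integration.integral_cong refl) (simp add: \<phi>_def indicator_def)
  also have "\<dots> = (\<Sum>\<sigma>\<in>{p. p permutes {0..<n}}. \<Sum>\<tau>\<in>{p. p permutes {0..<n}}.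
      of_int (sign \<sigma>) * of_int (sign \<tau>) * integral\<^sup>L M (\<lambda>y. \<Prod>k\<in>{..<n}. \<phi> (\<sigma> k + \<tau> k) (y k)))"
    by (simp add: integral_sum integrable_prod)
  also have "\<dots> = (\<Sum>\<sigma>\<in>{p. p permutes {0..<n}}. \<Sum>\<tau>\<in>{p. p permutes {0..<n}}.
      of_int (sign \<sigma>) * of_int (sign \<tau>) * (\<Prod>k\<in>{0..<n}. laguerre_moment a \<alpha> (\<sigma> k + \<tau> k)))"
    by (simp add: integral_prod atLeast0LessThan)
  finally show ?thesis .
qed

theorem mainTheorem11:
  fixes n \<alpha> :: nat and a :: complex
  assumes "n \<ge> 1" and "\<alpha> \<ge> 1"
  shows "R_int n a \<alpha> =
    (-1) ^ (n * \<alpha>) * (\<Prod>j<n. (of_nat (fact (j + 1)))\<^sup>2)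
    * (\<Prod>j<\<alpha>. of_nat (fact (n + j)) / of_nat (fact j))
    * Determinant.det (mat \<alpha> \<alpha> (\<lambda>(i, j). laguerre (j + 1) (int n + int i - int j) a))"
  \<comment> \<open>the identity holds for all \<open>n\<close> and \<open>\<alpha>\<close>\<close>
  unfolding R_int_eq_sum_permutations sum_permutations_sign_prod_hankel det_hankel_laguerre_moment ..

end
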